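(* In the model described in the context, with $\tilde k(p)=(1+\theta)p^c$ for $0<c<1$ and $\theta\ge0$, suppose $\lambda(1-c)<\gamma$. Then the optimal indemnity is $$I^*(x)=\Big(1-\frac{\lambda(1-c)}{\gamma}\Big)(x-d^* )_+,$$ where $d^*\ge0$ is the unique non-negative solution $d$ of the following equation. If $\lambda\ne\gamma$: $$e^{(\gamma-\lambda)d}\Big\{q^{1-c}e^{\lambda cd}-(1+\theta)q\,\frac{\gamma-\lambda(1-c)}{\gamma-\lambda}\Big\}=c(1+\theta)\Big(1-\frac{q\gamma}{\gamma-\lambda}\Big).$$ If $\lambda=\gamma$: $$q^{1-c}e^{\lambda cd}-(1+\theta)q\lambda cd=(1+\theta)\big(c+(1-c)q\big).$$ Furthermore, $d^*>0$ if and only if either $q<1$ or $\theta>0$.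
   Context: Let $X\ge0$ be a random variable with $\mathbb{P}(X=0)=1-q$, where $q\in(0,1]$, and with density $q\lambda e^{-\lambda x}$ on $(0,\infty)$, where $\lambda>0$. So $S_X(t)=qe^{-\lambda t}$ for $t\ge0$. $\mathcal{I}_c$ is the set of $I:[0,\infty)\to[0,\infty)$ with $0\le I(x)\le x$ and $0\le I(x)-I(y)\le x-y$ for $0\le y\le x$. For $Y\ge0$ with $S_Y(t)=\mathbb{P}(Y>t)$, the premium is $$\pi(Y)=\int_0^\infty\tilde k(S_Y(t))\,dt.$$ The buyer has wealth $w$ and utility $u$ with $u'(x)=e^{-\gamma x}$, $\gamma>0$. She chooses $I\in\mathcal{I}_c$ to maximize $\mathbb{E}[u(w-X+I(X)-\pi(I(X)))]$; the buyer's distortion is the identity. The optimal indemnity is unique up to $\mathbb{P}$-a.s. equality of $I(X)$. *)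

theory Defs
  imports "HOL-Analysis.Analysis"
begin

definition Ic :: "(real \<Rightarrow> real) set" where
  "Ic = {I. \<forall>x\<ge>0. 0 \<le> I x \<and> I x \<le> x \<and>
           (\<forall>y. 0 \<le> y \<and> y \<le> x \<longrightarrow> 0 \<le> I x - I y \<and> I x - I y \<le> x - y)}"

text \<open>Law of X: atom of mass 1-q at 0 and density q*lam*exp(-lam*x) on (0,inf).
  Expectation of f(X) and integrability of f(X).\<close>
definition ExpX :: "real \<Rightarrow> real \<Rightarrow> (real \<Rightarrow> real) \<Rightarrow> real" where
  "ExpX q lam f = (1 - q) * f 0 + q * (LINT x:{0<..}|lborel. lam * exp (- lam * x) * f x)"

definition integrableX :: "real \<Rightarrow> real \<Rightarrow> (real \<Rightarrow> real) \<Rightarrow> bool" where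
  "integrableX q lam f = set_integrable lborel {0<..} (\<lambda>x. lam * exp (- lam * x) * f x)"

definition survI :: "real \<Rightarrow> real \<Rightarrow> (real \<Rightarrow> real) \<Rightarrow> real \<Rightarrow> real" where
  "survI q lam I t = ExpX q lam (\<lambda>x. of_bool (I x > t))"

definition premium :: "(real \<Rightarrow> real) \<Rightarrow> real \<Rightarrow> real \<Rightarrow> (real \<Rightarrow> real) \<Rightarrow> real" where
  "premium k q lam I = (LINT t:{0..}|lborel. k (survI q lam I t))"

definition ktilde :: "real \<Rightarrow> real \<Rightarrow> real \<Rightarrow> real" where
  "ktilde \<theta> c p = (1 + \<theta>) * p powr c"

definition wealthFun :: "(real \<Rightarrow> real) \<Rightarrow> real \<Rightarrow> real \<Rightarrow> real \<Rightarrow> (real \<Rightarrow> real) \<Rightarrow> real \<Rightarrow> real" where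
  "wealthFun k w q lam I x = w - x + I x - premium k q lam I"

text \<open>Expected utility E[u(w - X + I(X) - pi(I(X)))].  Since u is bounded above,
  a non-integrable utility has expected value -infinity; this is encoded in optimalI.\<close>
definition EU :: "(real \<Rightarrow> real) \<Rightarrow> (real \<Rightarrow> real) \<Rightarrow> real \<Rightarrow> real \<Rightarrow> real \<Rightarrow> (real \<Rightarrow> real) \<Rightarrow> real" where
  "EU u k w q lam I = ExpX q lam (\<lambda>x. u (wealthFun k w q lam I x))"

definition optimalI :: "(real \<Rightarrow> real) \<Rightarrow> (real \<Rightarrow> real) \<Rightarrow> real \<Rightarrow> real \<Rightarrow> real \<Rightarrow> (real \<Rightarrow> real) \<Rightarrow> bool" where
  "optimalI u k w q lam I \<longleftrightarrow> I \<in> Ic \<and>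
     integrableX q lam (\<lambda>x. u (wealthFun k w q lam I x)) \<and>
     (\<forall>J\<in>Ic. integrableX q lam (\<lambda>x. u (wealthFun k w q lam J x)) \<longrightarrow>
        EU u k w q lam J \<le> EU u k w q lam I)"

definition dEq :: "real \<Rightarrow> real \<Rightarrow> real \<Rightarrow> real \<Rightarrow> real \<Rightarrow> real \<Rightarrow> bool" where
  "dEq q lam \<gamma> c \<theta> d \<longleftrightarrow>
    (if lam \<noteq> \<gamma> then
       exp ((\<gamma> - lam) * d) * (q powr (1 - c) * exp (lam * c * d)
          - (1 + \<theta>) * q * (\<gamma> - lam * (1 - c)) / (\<gamma> - lam))
       = c * (1 + \<theta>) * (1 - q * \<gamma> / (\<gamma> - lam))
     else
       q powr (1 - c) * exp (lam * c * d) - (1 + \<theta>) * q * lam * c * d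
       = (1 + \<theta>) * (c + (1 - c) * q))"

end

theory Submission
  imports Defs
begin

(* With exponential utility, maximising expected utility amounts to minimising
   exp(gamma pi(I)) E[exp(gamma (X - I(X)))].  For the candidate Istar x = a (x - d)_+ with
   a = 1 - lam (1 - c)/gamma, let rho(x) = exp(gamma (x - Istar x)).  The weighted density
   lam exp(-lam x) rho(x) is dominated by lam exp(beta d) exp(-lam c x), beta = gamma - lam (1 - c),
   with equality beyond d, while the premium of a layer [t, oo) is (1 + theta) q^c exp(-lam c t);
   the equation for d is precisely what makes the two match.  Slicing an indemnity into layers
   (layer-cake formula) therefore gives E[rho(X) I(X)] <= E[rho(X)] pi(I) for every admissible I,
   with equality for Istar.  The tangent-line inequality exp y >= exp m (1 + y - m) then shows that
   Istar is optimal, and its strictness that the optimum is unique almost everywhere, which in turn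
   forces uniqueness of the root d.  Whether d > 0 is decided by the sign of the equation at
   d = 0, i.e. by the weighted AM-GM inequality q^(1-c) <= c + (1 - c) q. *)

lemma exp_tangent_le: "exp m * (1 + (y - m)) \<le> exp (y :: real)"
proof -
  have "exp m * (1 + (y - m)) \<le> exp m * exp (y - m)"
    by (intro mult_left_mono exp_ge_add_one_self) simp
  then show ?thesis by (simp flip: exp_add)
qed

lemma exp_tangent_less:
  assumes "y \<noteq> m"
  shows "exp m * (1 + (y - m)) < exp (y :: real)"
proof -
  have "1 + (y - m) < exp (y - m)"
    using exp_minus_greater[of "m - y"] assms by simp
  then have "exp m * (1 + (y - m)) < exp m * exp (y - m)" by simp
  then show ?thesis by (simp flip: exp_add)
qed

lemma powr_less_convex_comb:
  fixes x p :: real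
  assumes "0 < x" "x \<noteq> 1" "0 < p" "p < 1"
  shows "x powr p < (1 - p) + p * x"
proof -
  define m where "m = p * ln x"
  have "ln x \<noteq> 0" using assms by simp
  then have "ln x \<noteq> m" "0 \<noteq> m" using assms unfolding m_def by auto
  then have "exp m * (1 + (ln x - m)) < x" "exp m * (1 + (0 - m)) < 1"
    using exp_tangent_less[of "ln x" m] exp_tangent_less[of 0 m] assms by auto
  then have "p * (exp m * (1 + (ln x - m))) + (1 - p) * (exp m * (1 + (0 - m))) < p * x + (1 - p)"
    using assms by (intro add_strict_mono mult_strict_left_mono) auto
  moreover have "p * (exp m * (1 + (ln x - m))) + (1 - p) * (exp m * (1 + (0 - m))) = exp m"
    unfolding m_def by (simp add: algebra_simps)
  moreover have "x powr p = exp m" unfolding m_def powr_def using assms by (simp add: mult.commute)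
  ultimately show ?thesis by simp
qed

definition exp_integral :: "real \<Rightarrow> real \<Rightarrow> real" where
  "exp_integral r d = (if r = 0 then d else (exp (r * d) - 1) / r)"

lemma exp_integral_0 [simp]: "exp_integral r 0 = 0"
  by (simp add: exp_integral_def)

lemma has_integral_exp_integral:
  assumes "0 \<le> d"
  shows "((\<lambda>x. exp (r * x)) has_integral exp_integral r d) {0..d}"
proof -
  have "(exp_integral r has_real_derivative exp (r * x)) (at x within {0..d})" for x
    unfolding exp_integral_def by (cases "r = 0") (auto intro!: derivative_eq_intros)
  from fundamental_theorem_of_calculus[OF assms this[unfolded has_real_derivative_iff_has_vector_derivative]]
  show ?thesis by simp
qed

lemma exp_integral_nonneg: "0 \<le> d \<Longrightarrow> 0 \<le> exp_integral r d"
  using has_integral_nonneg[OF has_integral_exp_integral] by simp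

lemma tendsto_exp_neg_at_top:
  fixes b :: real
  assumes "0 < b"
  shows "((\<lambda>x. exp (- b * x)) \<longlongrightarrow> 0) at_top"
proof -
  have "LIM x at_top. - b * x :> at_bot"
    using assms by (intro filterlim_tendsto_neg_mult_at_bot[OF tendsto_const] filterlim_ident) auto
  then show ?thesis by (rule filterlim_compose[OF exp_at_bot])
qed

lemma tendsto_mult_exp_neg_at_top:
  fixes b :: real
  assumes "0 < b"
  shows "((\<lambda>x. exp (- b * x) * x) \<longlongrightarrow> 0) at_top"
proof -
  have "LIM x at_top. b * x :> at_top"
    using assms by (intro filterlim_tendsto_pos_mult_at_top[OF tendsto_const] filterlim_ident) auto
  from filterlim_compose[OF tendsto_power_div_exp_0[of 1] this]
  have "((\<lambda>x. (1 / b) * ((b * x) ^ 1 / exp (b * x))) \<longlongrightarrow> (1 / b) * 0) at_top"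
    by (intro tendsto_mult tendsto_const) simp
  moreover have "(1 / b) * ((b * x) ^ 1 / exp (b * x)) = exp (- b * x) * x" for x
    using assms by (simp add: exp_minus field_simps)
  ultimately show ?thesis by simp
qed

lemma tendsto_exp_integral_damped:
  assumes "r < b" "0 < b"
  shows "((\<lambda>d. exp (- b * d) * exp_integral r d) \<longlongrightarrow> 0) at_top"
proof (cases "r = 0")
  case True
  then show ?thesis
    using tendsto_mult_exp_neg_at_top[OF assms(2)] by (simp add: exp_integral_def)
next
  case False
  have "exp (- b * d) * exp_integral r d = (exp (- (b - r) * d) - exp (- b * d)) / r" for d
    using False by (simp add: exp_integral_def field_simps flip: exp_add)
  moreover have "((\<lambda>d. (exp (- (b - r) * d) - exp (- b * d)) / r) \<longlongrightarrow> (0 - 0) / r) at_top"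
    using assms False by (intro tendsto_intros tendsto_exp_neg_at_top) auto
  ultimately show ?thesis by simp
qed

section \<open>Lebesgue integrals on the real line\<close>

lemma nn_integral_exp_tail:
  fixes r K t :: real
  assumes "0 < r" "0 \<le> K"
  shows "(\<integral>\<^sup>+x\<in>{t..}. ennreal (K * exp (- r * x)) \<partial>lborel) = ennreal (K * exp (- r * t) / r)"
  using nn_integral_has_integral_lebesgue'[OF _ has_integral_mult_right[OF has_integral_exp_minus_to_infinity[OF assms(1)]]]
    assms by simp

lemma set_lebesgue_integral_eq_enn2real:
  fixes f :: "real \<Rightarrow> real"
  assumes [measurable]: "f \<in> borel_measurable borel" "A \<in> sets borel" and "\<And>x. x \<in> A \<Longrightarrow> 0 \<le> f x"
  shows "(LINT x:A|lborel. f x) = enn2real (\<integral>\<^sup>+x\<in>A. ennreal (f x) \<partial>lborel)"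
proof -
  have "(\<integral>\<^sup>+x. ennreal (indicator A x *\<^sub>R f x) \<partial>lborel) = (\<integral>\<^sup>+x. ennreal (f x) * indicator A x \<partial>lborel)"
    by (intro nn_integral_cong) (auto split: split_indicator)
  then show ?thesis unfolding set_lebesgue_integral_def
    by (subst integral_eq_nn_integral) (use assms(3) in \<open>auto split: split_indicator\<close>)
qed

lemma set_integrable_nn_integral_less_top:
  fixes f :: "real \<Rightarrow> real"
  assumes [measurable]: "f \<in> borel_measurable borel" "A \<in> sets borel" and "\<And>x. x \<in> A \<Longrightarrow> 0 \<le> f x"
    and "(\<integral>\<^sup>+x\<in>A. ennreal (f x) \<partial>lborel) < \<infinity>"
  shows "set_integrable lborel A f"
  unfolding set_integrable_def
proof (rule integrableI_bounded)
  have "(\<integral>\<^sup>+x. ennreal (norm (indicator A x *\<^sub>R f x)) \<partial>lborel) = (\<integral>\<^sup>+x\<in>A. ennreal (f x) \<partial>lborel)"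
    using assms(3) by (intro nn_integral_cong) (auto split: split_indicator)
  then show "(\<integral>\<^sup>+x. ennreal (norm (indicator A x *\<^sub>R f x)) \<partial>lborel) < \<infinity>" using assms(4) by simp
qed simp

lemma set_integral_exp_tail:
  fixes r K t :: real
  assumes "0 < r" "0 \<le> K"
  shows "set_integrable lborel {t..} (\<lambda>x. K * exp (- r * x))"
    and "(LINT x:{t..}|lborel. K * exp (- r * x)) = K * exp (- r * t) / r"
  using set_integrable_nn_integral_less_top[of "\<lambda>x. K * exp (- r * x)" "{t..}"]
    set_lebesgue_integral_eq_enn2real[of "\<lambda>x. K * exp (- r * x)" "{t..}"]
  unfolding nn_integral_exp_tail[OF assms] using assms by auto

lemma AE_lborel_obtain_in_interval:
  fixes a b :: real
  assumes "AE x in lborel. P x" "a < b"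
  obtains x where "a < x" "x < b" "P x"
proof -
  have "\<not> (AE x in lborel. x \<notin> {a<..<b})"
  proof
    assume "AE x in lborel. x \<notin> {a<..<b}"
    then have "{a<..<b} \<in> null_sets lborel" by (subst AE_iff_null_sets) auto
    then show False using assms(2) by (simp add: null_sets_def)
  qed
  then obtain x where "x \<in> {a<..<b}" "P x"
    using assms(1) by (metis (mono_tags, lifting) eventually_mono)
  then show ?thesis using that by auto
qed

lemma AE_lborel_except_point: "(\<And>x. x \<noteq> a \<Longrightarrow> P x) \<Longrightarrow> AE x in lborel. P (x :: real)"
  using AE_lborel_singleton[of a] by (auto elim!: eventually_mono)

lemma upclosed_AE_iff_Inf_le:
  fixes U :: "real set"
  assumes "U \<noteq> {}" "bdd_below U" and up: "\<And>x y. x \<in> U \<Longrightarrow> x \<le> y \<Longrightarrow> y \<in> U"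
  shows "AE x in lborel. x \<in> U \<longleftrightarrow> Inf U \<le> x"
proof (rule AE_lborel_except_point[of "Inf U"])
  fix x assume "x \<noteq> Inf U"
  show "x \<in> U \<longleftrightarrow> Inf U \<le> x"
  proof
    assume "Inf U \<le> x"
    then have "Inf U < x" using \<open>x \<noteq> Inf U\<close> by simp
    then obtain y where "y \<in> U" "y < x" using cInf_less_iff[OF assms(1,2)] by auto
    then show "x \<in> U" using up by simp
  qed (use assms(2) in \<open>auto intro: cInf_lower\<close>)
qed

lemma nn_integral_layer_cake:
  fixes g J :: "real \<Rightarrow> real"
  assumes [measurable]: "g \<in> borel_measurable borel" "J \<in> borel_measurable borel" "A \<in> sets borel"
    and g: "\<And>x. 0 \<le> g x" and J: "\<And>x. x \<in> A \<Longrightarrow> 0 \<le> J x"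
  shows "(\<integral>\<^sup>+x\<in>A. ennreal (g x * J x) \<partial>lborel)
       = (\<integral>\<^sup>+s\<in>{0..}. (\<integral>\<^sup>+x\<in>{x \<in> A. s < J x}. ennreal (g x) \<partial>lborel) \<partial>lborel)"
proof -
  let ?F = "\<lambda>x s. ennreal (g x) * indicator A x * indicator {0..<J x} s"
  have "ennreal (g x * J x) * indicator A x = (\<integral>\<^sup>+s. ?F x s \<partial>lborel)" for x
  proof (cases "x \<in> A")
    case True
    then have "(\<integral>\<^sup>+s. ?F x s \<partial>lborel) = ennreal (g x) * ennreal (J x)"
      using J by (subst nn_integral_cmult) auto
    then show ?thesis using True g J by (simp add: ennreal_mult)
  qed simp
  then have "(\<integral>\<^sup>+x. ennreal (g x * J x) * indicator A x \<partial>lborel) = (\<integral>\<^sup>+x. (\<integral>\<^sup>+s. ?F x s \<partial>lborel) \<partial>lborel)"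
    by simp
  also have "\<dots> = (\<integral>\<^sup>+s. (\<integral>\<^sup>+x. ?F x s \<partial>lborel) \<partial>lborel)"
  proof (rule lborel_pair.Fubini'[symmetric])
    have "case_prod ?F = (\<lambda>p. ennreal (g (fst p)) * indicator A (fst p) * indicator {p. 0 \<le> snd p \<and> snd p < J (fst p)} p)"
      by (auto simp: fun_eq_iff split: split_indicator)
    also have "\<dots> \<in> borel_measurable (lborel \<Otimes>\<^sub>M lborel)" by measurable
    finally show "case_prod ?F \<in> borel_measurable (lborel \<Otimes>\<^sub>M lborel)" .
  qed
  also have "\<dots> = (\<integral>\<^sup>+s. (\<integral>\<^sup>+x. ennreal (g x) * indicator {x \<in> A. s < J x} x \<partial>lborel) * indicator {0..} s \<partial>lborel)"
  proof (intro nn_integral_cong)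
    fix s :: real
    have "(\<integral>\<^sup>+x. ?F x s \<partial>lborel) = (\<integral>\<^sup>+x. ennreal (g x) * indicator {x \<in> A. s < J x} x * indicator {0..} s \<partial>lborel)"
      by (intro nn_integral_cong) (auto split: split_indicator)
    also have "\<dots> = (\<integral>\<^sup>+x. ennreal (g x) * indicator {x \<in> A. s < J x} x \<partial>lborel) * indicator {0..} s"
      by (rule nn_integral_multc) measurable
    finally show "(\<integral>\<^sup>+x. ?F x s \<partial>lborel) = \<dots>" .
  qed
  finally show ?thesis .
qed

section \<open>The equation for the deductible\<close>

(* E[exp(gamma (X - I(X)))] in closed form for I(x) = (1 - lam (1 - c)/gamma) (x - d)_+,
   see Estar_eq. *)
definition retained_exp_moment :: "real \<Rightarrow> real \<Rightarrow> real \<Rightarrow> real \<Rightarrow> real \<Rightarrow> real" where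
  "retained_exp_moment q lam \<gamma> c d =
     1 - q + q * lam * exp_integral (\<gamma> - lam) d + q * exp ((\<gamma> - lam) * d) / c"

definition foc_gap :: "real \<Rightarrow> real \<Rightarrow> real \<Rightarrow> real \<Rightarrow> real \<Rightarrow> real \<Rightarrow> real" where
  "foc_gap q lam \<gamma> c \<theta> d =
     q powr (1 - c) * exp ((\<gamma> - lam * (1 - c)) * d) - c * (1 + \<theta>) * retained_exp_moment q lam \<gamma> c d"

lemma dEq_iff_foc_gap_eq_0:
  assumes "0 < c"
  shows "dEq q lam \<gamma> c \<theta> d \<longleftrightarrow> foc_gap q lam \<gamma> c \<theta> d = 0"
proof -
  have e: "exp ((\<gamma> - lam * (1 - c)) * d) = exp ((\<gamma> - lam) * d) * exp (lam * c * d)"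
    by (simp add: mult_exp_exp algebra_simps)
  show ?thesis
  proof (cases "\<gamma> = lam")
    case True
    have "c * (1 + \<theta>) * retained_exp_moment q lam \<gamma> c d
        = (1 + \<theta>) * (c + (1 - c) * q) + (1 + \<theta>) * q * lam * c * d"
      unfolding retained_exp_moment_def exp_integral_def using True assms by (simp add: field_simps)
    then show ?thesis unfolding dEq_def foc_gap_def e using True by auto
  next
    case False
    define D where "D = \<gamma> - lam"
    have "\<gamma> = D + lam" "D \<noteq> 0" using False unfolding D_def by auto
    then have "c * (1 + \<theta>) * retained_exp_moment q lam \<gamma> c d
        = c * (1 + \<theta>) * (1 - q * \<gamma> / (\<gamma> - lam))
          + exp ((\<gamma> - lam) * d) * ((1 + \<theta>) * q * (\<gamma> - lam * (1 - c)) / (\<gamma> - lam))"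
      unfolding retained_exp_moment_def exp_integral_def using assms by (simp add: field_simps)
    then show ?thesis unfolding dEq_def foc_gap_def e using False by (simp add: algebra_simps) linarith
  qed
qed

lemma foc_gap_at_0:
  assumes "0 < q" "q \<le> 1" "0 < c" "c < 1" "0 \<le> \<theta>"
  shows "foc_gap q lam \<gamma> c \<theta> 0 \<le> 0"
    and "foc_gap q lam \<gamma> c \<theta> 0 = 0 \<longleftrightarrow> q = 1 \<and> \<theta> = 0"
proof -
  have gap: "foc_gap q lam \<gamma> c \<theta> 0 = q powr (1 - c) - (1 + \<theta>) * (c + (1 - c) * q)"
    unfolding foc_gap_def retained_exp_moment_def using assms by (simp add: field_simps)
  define mean where "mean = c + (1 - c) * q"
  have "0 < mean" unfolding mean_def using assms by (simp add: add_pos_nonneg)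
  have amgm: "q powr (1 - c) \<le> mean"
    and amgm_strict: "q < 1 \<Longrightarrow> q powr (1 - c) < mean"
    and amgm_eq: "q = 1 \<Longrightarrow> q powr (1 - c) = mean"
    unfolding mean_def using powr_less_convex_comb[of q "1 - c"] assms by (cases "q = 1"; simp)+
  have "(1 + \<theta>) * mean = mean + \<theta> * mean" by (simp add: algebra_simps)
  then have loading: "mean \<le> (1 + \<theta>) * mean" and loading_strict: "0 < \<theta> \<Longrightarrow> mean < (1 + \<theta>) * mean"
    using \<open>0 < mean\<close> assms(5) by simp_all
  show "foc_gap q lam \<gamma> c \<theta> 0 \<le> 0" unfolding gap mean_def[symmetric] using amgm loading by simp
  show "foc_gap q lam \<gamma> c \<theta> 0 = 0 \<longleftrightarrow> q = 1 \<and> \<theta> = 0"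
    unfolding gap mean_def[symmetric] using amgm amgm_strict amgm_eq loading loading_strict assms(2,5) by force
qed

lemma foc_gap_has_root:
  assumes "0 < q" "q \<le> 1" "0 < lam" "0 < c" "c < 1" "0 \<le> \<theta>" "lam * (1 - c) < \<gamma>"
  obtains d where "0 \<le> d" "foc_gap q lam \<gamma> c \<theta> d = 0"
proof -
  define \<beta> where "\<beta> = \<gamma> - lam * (1 - c)"
  have "0 < \<beta>" "0 < lam * c" using assms unfolding \<beta>_def by auto
  define h where "h d = exp (- \<beta> * d) * foc_gap q lam \<gamma> c \<theta> d" for d
  have "h = (\<lambda>d. q powr (1 - c) - c * (1 + \<theta>) * ((1 - q) * exp (- \<beta> * d)
             + q * lam * (exp (- \<beta> * d) * exp_integral (\<gamma> - lam) d)) - (1 + \<theta>) * q * exp (- (lam * c) * d))"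
    (is "_ = ?h")
  proof
    fix d
    have "exp (- \<beta> * d) * exp (\<beta> * d) = 1" "exp (- \<beta> * d) * exp ((\<gamma> - lam) * d) = exp (- (lam * c) * d)"
      unfolding \<beta>_def by (simp_all add: algebra_simps flip: exp_add)
    then show "h d = ?h d"
      unfolding h_def foc_gap_def retained_exp_moment_def \<beta>_def[symmetric] using assms(4)
      by (simp add: field_simps)
  qed
  moreover have "(?h \<longlongrightarrow> q powr (1 - c) - c * (1 + \<theta>) * ((1 - q) * 0 + q * lam * 0) - (1 + \<theta>) * q * 0) at_top"
    using \<open>0 < \<beta>\<close> \<open>0 < lam * c\<close>
    by (intro tendsto_intros tendsto_exp_integral_damped tendsto_exp_neg_at_top) (auto simp: \<beta>_def right_diff_distrib)
  ultimately have "(h \<longlongrightarrow> q powr (1 - c)) at_top" by simp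
  moreover have "0 < q powr (1 - c)" using assms(1) by simp
  ultimately have "eventually (\<lambda>d. 0 < h d) at_top" by (rule order_tendstoD(1))
  then obtain D where "0 \<le> D" "0 < h D"
    by (metis eventually_at_top_linorder linorder_linear max.cobounded1 max.cobounded2)
  then have "0 \<le> foc_gap q lam \<gamma> c \<theta> D" unfolding h_def by (simp add: zero_less_mult_iff)
  moreover have "continuous_on {0..D} (foc_gap q lam \<gamma> c \<theta>)"
    unfolding foc_gap_def retained_exp_moment_def exp_integral_def using assms(4)
    by (cases "\<gamma> = lam") (auto intro!: continuous_intros)
  ultimately obtain d where "0 \<le> d" "d \<le> D" "foc_gap q lam \<gamma> c \<theta> d = 0"
    using IVT'[of "foc_gap q lam \<gamma> c \<theta>" 0 0 D] foc_gap_at_0(1)[OF assms(1,2,4,5,6)] \<open>0 \<le> D\<close> by auto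
  then show ?thesis using that by simp
qed

section \<open>Expectations under the law of \<open>X\<close>\<close>

lemma ExpX_cong:
  assumes "\<And>x. 0 \<le> x \<Longrightarrow> f x = g x"
  shows "ExpX q lam f = ExpX q lam g"
  unfolding ExpX_def using assms
  by (subst set_lebesgue_integral_cong[where g = "\<lambda>x. lam * exp (- lam * x) * g x"]) auto

lemma integrableX_cong:
  assumes "\<And>x. 0 \<le> x \<Longrightarrow> f x = g x"
  shows "integrableX q lam f \<longleftrightarrow> integrableX q lam g"
  unfolding integrableX_def using assms by (intro set_integrable_cong) auto

lemma integrableX_const: "0 < lam \<Longrightarrow> integrableX q lam (\<lambda>_. K)"
  and ExpX_const: "0 < lam \<Longrightarrow> ExpX q lam (\<lambda>_. K) = K"
proof -
  assume lam: "0 < lam"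
  have tail: "set_integrable lborel {0..} (\<lambda>x. lam * exp (- lam * x))"
    "(LINT x:{0..}|lborel. lam * exp (- lam * x)) = 1"
    using set_integral_exp_tail[OF lam, of lam 0] lam by auto
  have "set_integrable lborel {0<..} (\<lambda>x. lam * exp (- lam * x))"
    by (rule set_integrable_subset[OF tail(1)]) auto
  then show "integrableX q lam (\<lambda>_. K)" unfolding integrableX_def by simp
  have "(LINT x:{0<..}|lborel. lam * exp (- lam * x)) = (LINT x:{0..}|lborel. lam * exp (- lam * x))"
    by (rule set_integral_cong_set) (auto intro: AE_lborel_except_point[of 0] simp: set_borel_measurable_def)
  then show "ExpX q lam (\<lambda>_. K) = K" unfolding ExpX_def tail(2) by (simp add: algebra_simps)
qed

lemma integrableX_linear:
  "integrableX q lam f \<Longrightarrow> integrableX q lam g \<Longrightarrow> integrableX q lam (\<lambda>x. a * f x + b * g x)"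
  unfolding integrableX_def by (auto simp: algebra_simps)

lemma ExpX_linear:
  assumes "integrableX q lam f" "integrableX q lam g"
  shows "ExpX q lam (\<lambda>x. a * f x + b * g x) = a * ExpX q lam f + b * ExpX q lam g"
proof -
  have "set_integrable lborel {0<..} (\<lambda>x. a * (lam * exp (- lam * x) * f x))"
    "set_integrable lborel {0<..} (\<lambda>x. b * (lam * exp (- lam * x) * g x))"
    using assms unfolding integrableX_def by auto
  from set_integral_add(2)[OF this] show ?thesis
    unfolding ExpX_def by (simp add: algebra_simps)
qed

lemma integrableX_diff:
  "integrableX q lam f \<Longrightarrow> integrableX q lam g \<Longrightarrow> integrableX q lam (\<lambda>x. f x - g x)"
  unfolding integrableX_def by (auto simp: algebra_simps)

lemma ExpX_diff:
  assumes "integrableX q lam f" "integrableX q lam g"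
  shows "ExpX q lam (\<lambda>x. f x - g x) = ExpX q lam f - ExpX q lam g"
  using ExpX_linear[OF assms, of 1 "-1"] by simp

lemma ExpX_mono:
  assumes "0 \<le> q" "q \<le> 1" "0 \<le> lam" "integrableX q lam f" "integrableX q lam g"
    and "\<And>x. 0 \<le> x \<Longrightarrow> f x \<le> g x"
  shows "ExpX q lam f \<le> ExpX q lam g"
proof -
  have "(LINT x:{0<..}|lborel. lam * exp (- lam * x) * f x) \<le> (LINT x:{0<..}|lborel. lam * exp (- lam * x) * g x)"
    using assms(4,5) unfolding integrableX_def
    by (rule set_integral_mono) (use assms(3,6) in \<open>auto intro: mult_left_mono\<close>)
  then show ?thesis
    unfolding ExpX_def using assms(1,2) assms(6)[of 0] by (intro add_mono mult_left_mono) auto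
qed

lemma ExpX_mono_AE_eq:
  assumes "0 < q" "q \<le> 1" "0 < lam" "integrableX q lam f" "integrableX q lam g"
    and le: "\<And>x. 0 \<le> x \<Longrightarrow> f x \<le> g x" and ge: "ExpX q lam g \<le> ExpX q lam f"
  shows "AE x in lborel. 0 < x \<longrightarrow> f x = g x"
proof -
  define h where "h x = lam * exp (- lam * x) * g x - lam * exp (- lam * x) * f x" for x
  have int: "set_integrable lborel {0<..} h"
    using assms(4,5) unfolding integrableX_def h_def by auto
  have h_nonneg: "0 \<le> h x" if "0 \<le> x" for x
    unfolding h_def using le[OF that] assms(3) by (simp add: mult_left_mono)
  have h_diff: "(LINT x:{0<..}|lborel. h x)
      = (LINT x:{0<..}|lborel. lam * exp (- lam * x) * g x) - (LINT x:{0<..}|lborel. lam * exp (- lam * x) * f x)"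
    unfolding h_def using assms(5,4) unfolding integrableX_def by (rule set_integral_diff(2))
  have "ExpX q lam g - ExpX q lam f = (1 - q) * (g 0 - f 0) + q * (LINT x:{0<..}|lborel. h x)"
    unfolding ExpX_def h_diff by (simp add: algebra_simps)
  moreover have "0 \<le> (1 - q) * (g 0 - f 0)" using assms(2) le[of 0] by simp
  moreover have "0 \<le> (LINT x:{0<..}|lborel. h x)"
    using h_nonneg unfolding set_lebesgue_integral_def
    by (auto intro!: Bochner_Integration.integral_nonneg split: split_indicator)
  then have "0 \<le> q * (LINT x:{0<..}|lborel. h x)" using assms(1) by simp
  ultimately have "q * (LINT x:{0<..}|lborel. h x) = 0"
    using ge by linarith
  then have "integral\<^sup>L lborel (\<lambda>x. indicator {0<..} x *\<^sub>R h x) = 0"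
    using assms(1) unfolding set_lebesgue_integral_def by simp
  then have "AE x in lborel. indicator {0<..} x *\<^sub>R h x = 0"
    using int h_nonneg unfolding set_integrable_def
    by (subst (asm) integral_nonneg_eq_0_iff_AE) (auto split: split_indicator)
  then show ?thesis
    by eventually_elim (use assms(3) in \<open>auto simp: h_def indicator_def simp flip: right_diff_distrib\<close>)
qed

lemma survI_measurable [measurable]:
  assumes [measurable]: "J \<in> borel_measurable borel"
  shows "(\<lambda>s. survI q lam J s) \<in> borel_measurable borel"
  unfolding survI_def ExpX_def set_lebesgue_integral_def by measurable

lemma premium_cong:
  assumes "\<And>x. 0 \<le> x \<Longrightarrow> J x = J' x"
  shows "premium k q lam J = premium k q lam J'"
proof -
  have "survI q lam J = survI q lam J'"
    unfolding survI_def using assms by (intro ext ExpX_cong) simp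
  then show ?thesis unfolding premium_def by simp
qed

lemma ktilde_exp:
  assumes "0 \<le> q"
  shows "ktilde \<theta> c (q * exp (- lam * t)) = (1 + \<theta>) * q powr c * exp (- (lam * c) * t)"
  unfolding ktilde_def using assms by (simp add: powr_mult exp_powr_real algebra_simps)

section \<open>Monotone indemnities and their layers\<close>

definition monotone_indemnity :: "(real \<Rightarrow> real) \<Rightarrow> bool" where
  "monotone_indemnity J \<longleftrightarrow> mono J \<and> (\<forall>x\<ge>0. 0 \<le> J x \<and> J x \<le> x)"

lemma monotone_indemnity_measurable: "monotone_indemnity J \<Longrightarrow> J \<in> borel_measurable borel"
  unfolding monotone_indemnity_def by (simp add: borel_measurable_mono)

lemma monotone_indemnity_nonneg: "monotone_indemnity J \<Longrightarrow> 0 \<le> x \<Longrightarrow> 0 \<le> J x"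
  unfolding monotone_indemnity_def by simp

lemma monotone_indemnity_le: "monotone_indemnity J \<Longrightarrow> 0 \<le> x \<Longrightarrow> J x \<le> x"
  unfolding monotone_indemnity_def by simp

lemma monotone_indemnity_0:
  assumes "monotone_indemnity J"
  shows "J 0 = 0"
proof -
  have "0 \<le> J 0 \<and> J 0 \<le> 0" using assms unfolding monotone_indemnity_def by simp
  then show ?thesis by simp
qed

lemma Ic_bounds: "J \<in> Ic \<Longrightarrow> 0 \<le> x \<Longrightarrow> 0 \<le> J x \<and> J x \<le> x"
  unfolding Ic_def by simp

lemma Ic_increasing:
  assumes "J \<in> Ic" "0 \<le> y" "y \<le> x"
  shows "J y \<le> J x"
proof -
  have "\<forall>y. 0 \<le> y \<and> y \<le> x \<longrightarrow> 0 \<le> J x - J y"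
    using assms unfolding Ic_def by auto
  then show ?thesis using assms(2,3) by auto
qed

(* Ic only constrains indemnities on [0, oo); J (max x 0) agrees with J there and is monotone on
   the whole line, hence Borel measurable. *)
lemma monotone_indemnity_extend_Ic:
  assumes "J \<in> Ic"
  shows "monotone_indemnity (\<lambda>x. J (max x 0))"
  unfolding monotone_indemnity_def
proof
  show "mono (\<lambda>x. J (max x 0))"
    by (rule monoI) (simp add: Ic_increasing[OF assms] max.mono)
qed (simp add: Ic_bounds[OF assms])

lemma survI_eq_set_integral:
  assumes "J 0 \<le> s"
  shows "survI q lam J s = q * (LINT x:{x. 0 < x \<and> s < J x}|lborel. lam * exp (- lam * x))"
proof -
  have "(LINT x:{0<..}|lborel. lam * exp (- lam * x) * of_bool (s < J x))
      = (LINT x:{x. 0 < x \<and> s < J x}|lborel. lam * exp (- lam * x))"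
    unfolding set_lebesgue_integral_def
    by (intro Bochner_Integration.integral_cong refl) (simp split: split_indicator)
  then show ?thesis unfolding survI_def ExpX_def using assms by simp
qed

lemma survI_monotone_indemnity:
  assumes J: "monotone_indemnity J" and "0 \<le> s" "0 < lam"
  obtains "{x. 0 < x \<and> s < J x} = {}" "survI q lam J s = 0"
    | t where "s \<le> t" "AE x in lborel. (0 < x \<and> s < J x) \<longleftrightarrow> t \<le> x"
      "survI q lam J s = q * exp (- lam * t)"
proof -
  let ?U = "{x. 0 < x \<and> s < J x}"
  have [measurable]: "J \<in> borel_measurable borel" by (rule monotone_indemnity_measurable[OF J])
  have S: "survI q lam J s = q * (LINT x:?U|lborel. lam * exp (- lam * x))"
    using monotone_indemnity_0[OF J] \<open>0 \<le> s\<close> by (intro survI_eq_set_integral) simp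
  show ?thesis
  proof (cases "?U = {}")
    case True
    then show ?thesis using that(1) S by (simp add: set_lebesgue_integral_def)
  next
    case False
    have bdd: "bdd_below ?U" by (rule bdd_belowI[of _ 0]) simp
    have up: "y \<in> ?U" if "x \<in> ?U" "x \<le> y" for x y
    proof -
      have "0 < y" using that by simp
      moreover have "s < J y"
        using that J order.strict_trans2[of s "J x" "J y"] unfolding monotone_indemnity_def mono_def by blast
      ultimately show ?thesis by simp
    qed
    have AE: "AE x in lborel. x \<in> ?U \<longleftrightarrow> Inf ?U \<le> x"
      by (rule upclosed_AE_iff_Inf_le[OF False bdd up])
    have "s \<le> x" if "x \<in> ?U" for x
      using that monotone_indemnity_le[OF J, of x] by simp
    then have "s \<le> Inf ?U" using False by (intro cInf_greatest) simp_all
    have "(LINT x:?U|lborel. lam * exp (- lam * x)) = (LINT x:{Inf ?U..}|lborel. lam * exp (- lam * x))"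
    proof (rule set_integral_cong_set)
      show "AE x in lborel. x \<in> {Inf ?U..} \<longleftrightarrow> x \<in> ?U" using AE by (rule eventually_mono) (simp only: atLeast_iff)
    qed (unfold set_borel_measurable_def; measurable)+
    also have "\<dots> = exp (- lam * Inf ?U)"
      using set_integral_exp_tail(2)[OF \<open>0 < lam\<close>, of lam "Inf ?U"] \<open>0 < lam\<close> by simp
    finally have "survI q lam J s = q * exp (- lam * Inf ?U)"
      unfolding S by (rule arg_cong[where f = "(*) q"])
    moreover have "AE x in lborel. (0 < x \<and> s < J x) \<longleftrightarrow> Inf ?U \<le> x" using AE by simp
    ultimately show ?thesis by (intro that(2)[OF \<open>s \<le> Inf ?U\<close>])
  qed
qed

lemma layer_indemnity_AE_eq_imp_eq:
  fixes a d d' :: real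
  assumes "0 < a" "0 \<le> d" "0 \<le> d'"
    and "AE x in lborel. 0 < x \<longrightarrow> a * max (x - d') 0 = a * max (x - d) 0"
  shows "d' = d"
proof (rule ccontr)
  assume "d' \<noteq> d"
  then have "min d d' < max d d'" by (auto simp: min_def max_def)
  then obtain x where "min d d' < x" "x < max d d'" "0 < x \<longrightarrow> a * max (x - d') 0 = a * max (x - d) 0"
    by (rule AE_lborel_obtain_in_interval[OF assms(4)])
  then show False using assms(1-3) by (cases "d \<le> d'") (auto simp: min_def max_def)
qed

section \<open>Exponential utility\<close>

lemma exp_utility_form:
  fixes u :: "real \<Rightarrow> real" and \<gamma> :: real
  assumes "\<And>x. (u has_real_derivative exp (- \<gamma> * x)) (at x)" "\<gamma> \<noteq> 0"
  obtains K where "\<And>y. u y = K - exp (- \<gamma> * y) / \<gamma>"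
proof -
  define v where "v y = u y + exp (- \<gamma> * y) / \<gamma>" for y
  have "DERIV v x :> 0" for x
  proof -
    have "DERIV (\<lambda>y. exp (- \<gamma> * y) / \<gamma>) x :> exp (- \<gamma> * x) * (- \<gamma>) / \<gamma>"
      by (auto intro!: derivative_eq_intros)
    from DERIV_add[OF assms(1) this] show ?thesis
      using assms(2) unfolding v_def by simp
  qed
  then have "v y = v 0" for y by (intro DERIV_isconst_all allI)
  then show ?thesis by (intro that[of "v 0"]) (simp add: v_def algebra_simps)
qed

lemma EU_exp_utility:
  fixes \<gamma> K :: real
  assumes u: "\<And>y. u y = K - exp (- \<gamma> * y) / \<gamma>" and "0 < lam" "\<gamma> \<noteq> 0"
  shows "integrableX q lam (\<lambda>x. u (wealthFun k w q lam J x)) \<longleftrightarrow> integrableX q lam (\<lambda>x. exp (\<gamma> * (x - J x)))"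
    and "integrableX q lam (\<lambda>x. exp (\<gamma> * (x - J x))) \<Longrightarrow>
         EU u k w q lam J
           = K - exp (- \<gamma> * w) / \<gamma> * (exp (\<gamma> * premium k q lam J) * ExpX q lam (\<lambda>x. exp (\<gamma> * (x - J x))))"
proof -
  define C where "C = exp (- \<gamma> * w) * exp (\<gamma> * premium k q lam J) / \<gamma>"
  have "C \<noteq> 0" unfolding C_def using assms(3) by simp
  have utility: "u (wealthFun k w q lam J x) = K * 1 + (- C) * exp (\<gamma> * (x - J x))" for x
  proof -
    have "exp (- \<gamma> * wealthFun k w q lam J x) = exp (- \<gamma> * w) * exp (\<gamma> * premium k q lam J) * exp (\<gamma> * (x - J x))"
      unfolding wealthFun_def by (simp add: algebra_simps flip: exp_add)
    then show ?thesis unfolding u C_def by simp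
  qed
  have retained: "exp (\<gamma> * (x - J x)) = K / C * 1 + (- 1 / C) * u (wealthFun k w q lam J x)" for x
    unfolding utility using \<open>C \<noteq> 0\<close> by (simp add: field_simps)
  note const = integrableX_const[OF \<open>0 < lam\<close>, of q 1]
  show "integrableX q lam (\<lambda>x. u (wealthFun k w q lam J x)) \<longleftrightarrow> integrableX q lam (\<lambda>x. exp (\<gamma> * (x - J x)))"
  proof
    assume "integrableX q lam (\<lambda>x. u (wealthFun k w q lam J x))"
    from integrableX_linear[OF const this, of "K / C" "- 1 / C"]
    show "integrableX q lam (\<lambda>x. exp (\<gamma> * (x - J x)))" by (simp only: retained)
  next
    assume "integrableX q lam (\<lambda>x. exp (\<gamma> * (x - J x)))"
    from integrableX_linear[OF const this, of K "- C"]
    show "integrableX q lam (\<lambda>x. u (wealthFun k w q lam J x))" by (simp only: utility)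
  qed
  assume "integrableX q lam (\<lambda>x. exp (\<gamma> * (x - J x)))"
  from ExpX_linear[OF const this, of K "- C"]
  show "EU u k w q lam J
      = K - exp (- \<gamma> * w) / \<gamma> * (exp (\<gamma> * premium k q lam J) * ExpX q lam (\<lambda>x. exp (\<gamma> * (x - J x))))"
    unfolding EU_def utility ExpX_const[OF \<open>0 < lam\<close>] C_def by simp
qed

section \<open>Optimality of the layer indemnity\<close>

(* d is any non-negative root; that there is only one is derived at the end from the almost
   everywhere uniqueness of the optimal indemnity. *)
locale deductible_root =
  fixes q lam \<gamma> c \<theta> d :: real
  assumes q_pos: "0 < q" and q_le_1: "q \<le> 1" and lam_pos: "0 < lam" and \<gamma>_pos: "0 < \<gamma>"
    and c_pos: "0 < c" and c_less_1: "c < 1" and \<theta>_nonneg: "0 \<le> \<theta>"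
    and \<gamma>_gt: "lam * (1 - c) < \<gamma>"
    and d_nonneg: "0 \<le> d" and root: "foc_gap q lam \<gamma> c \<theta> d = 0"
begin

definition slope :: real where "slope = 1 - lam * (1 - c) / \<gamma>"

definition \<beta> :: real where "\<beta> = \<gamma> - lam * (1 - c)"

definition Istar :: "real \<Rightarrow> real" where "Istar x = slope * max (x - d) 0"

(* Proportional to the marginal utility u'(w - x + Istar x - pi(Istar)) at the candidate optimum. *)
definition \<rho> :: "real \<Rightarrow> real" where "\<rho> x = exp (\<gamma> * (x - Istar x))"

definition tilted :: "real \<Rightarrow> real" where "tilted x = lam * exp (- lam * x) * \<rho> x"

definition Estar :: real where "Estar = ExpX q lam \<rho>"

(* By EU_exp_utility, EU = K - exp (- gamma w) / gamma * cost, so maximising EU means minimising cost. *)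
definition cost :: "(real \<Rightarrow> real) \<Rightarrow> real" where
  "cost J = exp (\<gamma> * premium (ktilde \<theta> c) q lam J) * ExpX q lam (\<lambda>x. exp (\<gamma> * (x - J x)))"

lemma \<beta>_eq: "\<beta> = \<gamma> * slope"
  unfolding \<beta>_def slope_def using \<gamma>_pos by (simp add: field_simps)

lemma \<beta>_pos: "0 < \<beta>"
  using \<gamma>_gt unfolding \<beta>_def by simp

lemma slope_pos: "0 < slope"
  using \<beta>_pos \<gamma>_pos unfolding \<beta>_eq by (simp add: zero_less_mult_iff)

lemma slope_le_1: "slope \<le> 1"
  unfolding slope_def using lam_pos c_less_1 \<gamma>_pos by simp

lemma \<gamma>_mult_one_minus_slope: "\<gamma> * (1 - slope) = lam * (1 - c)"
  unfolding slope_def using \<gamma>_pos by (simp add: field_simps)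

lemma lam_c_pos: "0 < lam * c"
  using lam_pos c_pos by simp

lemma Istar_eq: "Istar = (\<lambda>x. (1 - lam * (1 - c) / \<gamma>) * max (x - d) 0)"
  unfolding Istar_def slope_def ..

lemma Istar_nonneg: "0 \<le> Istar x"
  unfolding Istar_def using slope_pos by simp

lemma Istar_le: "0 \<le> x \<Longrightarrow> Istar x \<le> x"
  unfolding Istar_def using slope_pos slope_le_1 d_nonneg
  by (cases "x \<le> d") (auto intro: mult_left_le_one_le order.trans[of _ "x - d"])

lemma Istar_in_Ic: "Istar \<in> Ic"
proof -
  have "0 \<le> Istar x - Istar y \<and> Istar x - Istar y \<le> x - y" if "y \<le> x" for x y
  proof -
    define D where "D = max (x - d) 0 - max (y - d) 0"
    have "0 \<le> D" "D \<le> x - y" using that unfolding D_def by (auto simp: max_def)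
    moreover have "slope * D \<le> D" using \<open>0 \<le> D\<close> slope_pos slope_le_1 by (simp add: mult_left_le_one_le)
    moreover have "Istar x - Istar y = slope * D"
      unfolding Istar_def D_def by (simp add: algebra_simps)
    ultimately show ?thesis using slope_pos by simp
  qed
  then show ?thesis unfolding Ic_def using Istar_nonneg Istar_le by auto
qed

lemma monotone_indemnity_Istar: "monotone_indemnity Istar"
  unfolding monotone_indemnity_def using Istar_nonneg Istar_le slope_pos
  by (auto intro!: monoI mult_left_mono simp: Istar_def)

lemma Istar_layers_above_d: "0 \<le> s \<Longrightarrow> 0 < x \<Longrightarrow> s < Istar x \<Longrightarrow> d \<le> x"
  unfolding Istar_def using slope_pos by (cases "d \<le> x") auto

lemma tilted_eq: "tilted x = lam * exp (- lam * x + \<gamma> * (x - Istar x))"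
  unfolding tilted_def \<rho>_def by (simp add: mult_exp_exp)

lemma tilted_pos: "0 < tilted x"
  unfolding tilted_def \<rho>_def using lam_pos by simp

lemma tilted_measurable [measurable]: "tilted \<in> borel_measurable borel"
  unfolding tilted_def \<rho>_def Istar_def by measurable

lemma tilted_head: "x \<le> d \<Longrightarrow> tilted x = lam * exp ((\<gamma> - lam) * x)"
  unfolding tilted_eq Istar_def by (simp add: algebra_simps)

lemma tilted_tail: "d \<le> x \<Longrightarrow> tilted x = lam * exp (\<beta> * d) * exp (- (lam * c) * x)"
proof -
  assume "d \<le> x"
  then have "\<gamma> * (x - Istar x) = \<gamma> * (1 - slope) * x + \<gamma> * slope * d"
    unfolding Istar_def by (simp add: algebra_simps)
  then have "- lam * x + \<gamma> * (x - Istar x) = \<beta> * d + - (lam * c) * x"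
    unfolding \<gamma>_mult_one_minus_slope \<beta>_eq[symmetric] by (simp add: algebra_simps)
  then show ?thesis unfolding tilted_eq by (simp only: exp_add mult.assoc)
qed

lemma tilted_le_tail: "tilted x \<le> lam * exp (\<beta> * d) * exp (- (lam * c) * x)"
proof (cases "d \<le> x")
  case False
  have "(\<gamma> - lam) * x = \<beta> * x + - (lam * c) * x" unfolding \<beta>_def by (simp add: algebra_simps)
  also have "\<dots> \<le> \<beta> * d + - (lam * c) * x" using False \<beta>_pos by simp
  finally show ?thesis
    using False lam_pos by (simp add: tilted_head mult.assoc flip: exp_add)
qed (simp add: tilted_tail)

lemma nn_integral_tilted:
  "(\<integral>\<^sup>+x\<in>{0<..}. ennreal (tilted x) \<partial>lborel)
     = ennreal (lam * exp_integral (\<gamma> - lam) d + exp ((\<gamma> - lam) * d) / c)"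
proof -
  have "(\<integral>\<^sup>+x\<in>{0<..}. ennreal (tilted x) \<partial>lborel)
      = (\<integral>\<^sup>+x. ennreal (tilted x) * indicator {0..d} x + ennreal (tilted x) * indicator {d<..} x \<partial>lborel)"
    by (intro nn_integral_cong_AE AE_lborel_except_point[of 0])
      (use d_nonneg in \<open>auto split: split_indicator\<close>)
  also have "\<dots> = (\<integral>\<^sup>+x\<in>{0..d}. ennreal (tilted x) \<partial>lborel) + (\<integral>\<^sup>+x\<in>{d<..}. ennreal (tilted x) \<partial>lborel)"
    by (intro nn_integral_add) auto
  also have "(\<integral>\<^sup>+x\<in>{0..d}. ennreal (tilted x) \<partial>lborel)
      = (\<integral>\<^sup>+x\<in>{0..d}. ennreal (lam * exp ((\<gamma> - lam) * x)) \<partial>lborel)"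
    by (intro nn_integral_cong) (auto simp: tilted_head split: split_indicator)
  also have "\<dots> = ennreal (lam * exp_integral (\<gamma> - lam) d)"
    using nn_integral_has_integral_lebesgue'[OF _ has_integral_mult_right[OF has_integral_exp_integral[OF d_nonneg]]]
      lam_pos by simp
  also have "(\<integral>\<^sup>+x\<in>{d<..}. ennreal (tilted x) \<partial>lborel)
      = (\<integral>\<^sup>+x\<in>{d..}. ennreal (lam * exp (\<beta> * d) * exp (- (lam * c) * x)) \<partial>lborel)"
    by (intro nn_integral_cong_AE AE_lborel_except_point[of d]) (auto simp: tilted_tail split: split_indicator)
  also have "\<dots> = ennreal (lam * exp (\<beta> * d) * exp (- (lam * c) * d) / (lam * c))"
    by (rule nn_integral_exp_tail[OF lam_c_pos]) (use lam_pos in simp)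
  also have "lam * exp (\<beta> * d) * exp (- (lam * c) * d) / (lam * c) = exp ((\<gamma> - lam) * d) / c"
    using lam_pos unfolding \<beta>_def by (simp add: algebra_simps flip: exp_add)
  finally show ?thesis
    using lam_pos c_pos exp_integral_nonneg[OF d_nonneg]
    by (simp add: ennreal_plus[symmetric] del: ennreal_plus)
qed

lemma integrableX_\<rho>: "integrableX q lam \<rho>"
  unfolding integrableX_def tilted_def[symmetric]
  by (rule set_integrable_nn_integral_less_top) (auto simp: nn_integral_tilted less_imp_le[OF tilted_pos])

lemma Estar_eq: "Estar = retained_exp_moment q lam \<gamma> c d"
proof -
  have "(LINT x:{0<..}|lborel. tilted x) = lam * exp_integral (\<gamma> - lam) d + exp ((\<gamma> - lam) * d) / c"
    using lam_pos c_pos exp_integral_nonneg[OF d_nonneg]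
    by (simp add: set_lebesgue_integral_eq_enn2real less_imp_le[OF tilted_pos] nn_integral_tilted
        del: ennreal_plus)
  moreover have "\<rho> 0 = 1" unfolding \<rho>_def Istar_def using d_nonneg by simp
  ultimately show ?thesis
    unfolding Estar_def ExpX_def tilted_def[symmetric] retained_exp_moment_def by (simp add: algebra_simps)
qed

lemma Estar_pos: "0 < Estar"
proof -
  have "0 < q * (lam * exp_integral (\<gamma> - lam) d + exp ((\<gamma> - lam) * d) / c)"
    using q_pos lam_pos c_pos exp_integral_nonneg[OF d_nonneg] by (intro mult_pos_pos add_nonneg_pos) auto
  then show ?thesis using q_le_1 unfolding Estar_eq retained_exp_moment_def by (simp add: algebra_simps)
qed

lemma ExpX_exp_retained_Istar: "ExpX q lam (\<lambda>x. exp (\<gamma> * (x - Istar x))) = Estar"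
  unfolding Estar_def \<rho>_def ..

lemma Estar_first_order_condition: "Estar * (1 + \<theta>) * q powr c = q * exp (\<beta> * d) / c"
proof -
  have "c * (1 + \<theta>) * Estar * q powr c = q powr (1 - c) * q powr c * exp (\<beta> * d)"
    using root unfolding foc_gap_def Estar_eq \<beta>_def by simp
  also have "q powr (1 - c) * q powr c = q" using q_pos by (simp flip: powr_add)
  finally show ?thesis using c_pos by (simp add: field_simps)
qed

lemma ktilde_survI_le:
  assumes J: "monotone_indemnity J" and "0 \<le> s"
  shows "ktilde \<theta> c (survI q lam J s) \<le> (1 + \<theta>) * q powr c * exp (- (lam * c) * s)"
proof (cases rule: survI_monotone_indemnity[OF J \<open>0 \<le> s\<close> lam_pos, where q = q])
  case 1
  then show ?thesis using \<theta>_nonneg by (simp add: ktilde_def)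
next
  case (2 t)
  have "exp (- (lam * c) * t) \<le> exp (- (lam * c) * s)"
    using \<open>s \<le> t\<close> lam_c_pos by (simp add: mult_left_mono)
  then show ?thesis
    unfolding \<open>survI q lam J s = q * exp (- lam * t)\<close> ktilde_exp[OF less_imp_le[OF q_pos]]
    using \<theta>_nonneg q_pos by (intro mult_left_mono) auto
qed

(* This is where the root condition enters: weighted by Estar, the premium of the layer
   [t, oo) is q times the mass of the envelope of tilted beyond t. *)
lemma premium_of_layer:
  "ennreal (Estar * ktilde \<theta> c (q * exp (- lam * t)))
     = ennreal q * (\<integral>\<^sup>+x\<in>{t..}. ennreal (lam * exp (\<beta> * d) * exp (- (lam * c) * x)) \<partial>lborel)"
proof -
  have "Estar * ktilde \<theta> c (q * exp (- lam * t)) = (Estar * (1 + \<theta>) * q powr c) * exp (- (lam * c) * t)"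
    unfolding ktilde_exp[OF less_imp_le[OF q_pos]] by (simp add: mult.assoc)
  also have "\<dots> = q * (lam * exp (\<beta> * d) * exp (- (lam * c) * t) / (lam * c))"
    unfolding Estar_first_order_condition using lam_pos by simp
  finally have layer: "Estar * ktilde \<theta> c (q * exp (- lam * t))
      = q * (lam * exp (\<beta> * d) * exp (- (lam * c) * t) / (lam * c))" .
  show ?thesis
    unfolding layer nn_integral_exp_tail[OF lam_c_pos mult_nonneg_nonneg[OF less_imp_le[OF lam_pos] exp_ge_zero]]
    by (intro ennreal_mult) (use q_pos lam_pos c_pos in auto)
qed

lemma layer_premium_le:
  assumes J: "monotone_indemnity J" and "0 \<le> s"
  shows "ennreal q * (\<integral>\<^sup>+x\<in>{x. 0 < x \<and> s < J x}. ennreal (tilted x) \<partial>lborel)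
           \<le> ennreal (Estar * ktilde \<theta> c (survI q lam J s))"
proof (cases rule: survI_monotone_indemnity[OF J \<open>0 \<le> s\<close> lam_pos, where q = q])
  case (2 t)
  have on_layer: "(\<integral>\<^sup>+x\<in>{x. 0 < x \<and> s < J x}. ennreal (tilted x) \<partial>lborel)
      = (\<integral>\<^sup>+x\<in>{t..}. ennreal (tilted x) \<partial>lborel)"
    using 2(2) by (intro nn_integral_cong_AE) (auto elim!: eventually_mono split: split_indicator)
  show ?thesis
    unfolding on_layer 2(3) premium_of_layer
    by (intro mult_left_mono nn_integral_mono) (use tilted_le_tail in \<open>auto intro!: ennreal_leI split: split_indicator\<close>)
qed (simp add: ktilde_def)

lemma layer_premium_eq:
  assumes J: "monotone_indemnity J" and "0 \<le> s" and above_d: "\<And>x. 0 < x \<Longrightarrow> s < J x \<Longrightarrow> d \<le> x"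
  shows "ennreal q * (\<integral>\<^sup>+x\<in>{x. 0 < x \<and> s < J x}. ennreal (tilted x) \<partial>lborel)
           = ennreal (Estar * ktilde \<theta> c (survI q lam J s))"
proof (cases rule: survI_monotone_indemnity[OF J \<open>0 \<le> s\<close> lam_pos, where q = q])
  case (2 t)
  have "d \<le> t"
  proof (rule ccontr)
    assume "\<not> d \<le> t"
    then obtain x where "t < x" "x < d" "(0 < x \<and> s < J x) \<longleftrightarrow> t \<le> x"
      using AE_lborel_obtain_in_interval[OF 2(2), of t d] by auto
    then show False using above_d[of x] by auto
  qed
  have "(\<integral>\<^sup>+x\<in>{x. 0 < x \<and> s < J x}. ennreal (tilted x) \<partial>lborel) = (\<integral>\<^sup>+x\<in>{t..}. ennreal (tilted x) \<partial>lborel)"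
    using 2(2) by (intro nn_integral_cong_AE) (auto elim!: eventually_mono split: split_indicator)
  also have "\<dots> = (\<integral>\<^sup>+x\<in>{t..}. ennreal (lam * exp (\<beta> * d) * exp (- (lam * c) * x)) \<partial>lborel)"
    using \<open>d \<le> t\<close> by (intro nn_integral_cong) (auto simp: tilted_tail split: split_indicator)
  finally show ?thesis unfolding 2(3) premium_of_layer by simp
qed (simp add: ktilde_def)

lemma nn_integral_premium_finite:
  assumes J: "monotone_indemnity J"
  shows "(\<integral>\<^sup>+s\<in>{0..}. ennreal (ktilde \<theta> c (survI q lam J s)) \<partial>lborel) < \<infinity>"
proof -
  have "(\<integral>\<^sup>+s\<in>{0..}. ennreal (ktilde \<theta> c (survI q lam J s)) \<partial>lborel)
      \<le> (\<integral>\<^sup>+s\<in>{0..}. ennreal ((1 + \<theta>) * q powr c * exp (- (lam * c) * s)) \<partial>lborel)"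
    by (intro nn_integral_mono) (use ktilde_survI_le[OF J] in \<open>auto intro!: ennreal_leI split: split_indicator\<close>)
  also have "\<dots> = ennreal ((1 + \<theta>) * q powr c * exp (- (lam * c) * 0) / (lam * c))"
    by (rule nn_integral_exp_tail[OF lam_c_pos]) (use \<theta>_nonneg in simp)
  also have "\<dots> < \<infinity>" by simp
  finally show ?thesis .
qed

lemma nn_integral_premium_cmult:
  assumes [measurable]: "J \<in> borel_measurable borel"
  shows "ennreal Estar * (\<integral>\<^sup>+s\<in>{0..}. ennreal (ktilde \<theta> c (survI q lam J s)) \<partial>lborel)
     = (\<integral>\<^sup>+s\<in>{0..}. ennreal (Estar * ktilde \<theta> c (survI q lam J s)) \<partial>lborel)"
  using Estar_pos unfolding ktilde_def
  by (subst nn_integral_cmult[symmetric]) (auto simp: ennreal_mult' mult.assoc intro!: nn_integral_cong)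

lemma nn_integral_tilted_mult_layers:
  assumes J: "monotone_indemnity J"
  shows "ennreal q * (\<integral>\<^sup>+x\<in>{0<..}. ennreal (tilted x * J x) \<partial>lborel)
       = (\<integral>\<^sup>+s\<in>{0..}. ennreal q * (\<integral>\<^sup>+x\<in>{x. 0 < x \<and> s < J x}. ennreal (tilted x) \<partial>lborel) \<partial>lborel)"
proof -
  have [measurable]: "J \<in> borel_measurable borel" by (rule monotone_indemnity_measurable[OF J])
  have "(\<integral>\<^sup>+x\<in>{0<..}. ennreal (tilted x * J x) \<partial>lborel)
      = (\<integral>\<^sup>+s\<in>{0..}. (\<integral>\<^sup>+x\<in>{x \<in> {0<..}. s < J x}. ennreal (tilted x) \<partial>lborel) \<partial>lborel)"
    by (rule nn_integral_layer_cake) (auto intro: less_imp_le[OF tilted_pos] monotone_indemnity_nonneg[OF J])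
  then have "ennreal q * (\<integral>\<^sup>+x\<in>{0<..}. ennreal (tilted x * J x) \<partial>lborel)
      = (\<integral>\<^sup>+s. ennreal q * ((\<integral>\<^sup>+x\<in>{x. 0 < x \<and> s < J x}. ennreal (tilted x) \<partial>lborel) * indicator {0..} s) \<partial>lborel)"
    by (simp only: greaterThan_iff mem_Collect_eq) (rule nn_integral_cmult[symmetric], measurable)
  then show ?thesis by (simp only: mult.assoc)
qed

lemma nn_integral_tilted_mult_le_premium:
  assumes J: "monotone_indemnity J"
  shows "ennreal q * (\<integral>\<^sup>+x\<in>{0<..}. ennreal (tilted x * J x) \<partial>lborel)
      \<le> ennreal Estar * (\<integral>\<^sup>+s\<in>{0..}. ennreal (ktilde \<theta> c (survI q lam J s)) \<partial>lborel)"
  unfolding nn_integral_tilted_mult_layers[OF J] nn_integral_premium_cmult[OF monotone_indemnity_measurable[OF J]]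
  by (intro nn_integral_mono) (auto intro!: layer_premium_le[OF J] split: split_indicator)

lemma nn_integral_tilted_mult_eq_premium:
  assumes J: "monotone_indemnity J" and "\<And>s x. 0 \<le> s \<Longrightarrow> 0 < x \<Longrightarrow> s < J x \<Longrightarrow> d \<le> x"
  shows "ennreal q * (\<integral>\<^sup>+x\<in>{0<..}. ennreal (tilted x * J x) \<partial>lborel)
      = ennreal Estar * (\<integral>\<^sup>+s\<in>{0..}. ennreal (ktilde \<theta> c (survI q lam J s)) \<partial>lborel)"
  unfolding nn_integral_tilted_mult_layers[OF J] nn_integral_premium_cmult[OF monotone_indemnity_measurable[OF J]]
  by (intro nn_integral_cong) (auto intro!: layer_premium_eq[OF J] assms(2) split: split_indicator)

lemma density_\<rho>_mult_eq_tilted: "(\<lambda>x. lam * exp (- lam * x) * (\<rho> x * J x)) = (\<lambda>x. tilted x * J x)"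
  unfolding tilted_def by (simp add: mult.assoc)

lemma ExpX_\<rho>_mult_eq_enn2real:
  assumes J: "monotone_indemnity J"
  shows "ExpX q lam (\<lambda>x. \<rho> x * J x) = q * enn2real (\<integral>\<^sup>+x\<in>{0<..}. ennreal (tilted x * J x) \<partial>lborel)"
proof -
  have [measurable]: "J \<in> borel_measurable borel" by (rule monotone_indemnity_measurable[OF J])
  have "(LINT x:{0<..}|lborel. tilted x * J x) = enn2real (\<integral>\<^sup>+x\<in>{0<..}. ennreal (tilted x * J x) \<partial>lborel)"
    using monotone_indemnity_nonneg[OF J] tilted_pos
    by (intro set_lebesgue_integral_eq_enn2real) (auto intro: mult_nonneg_nonneg less_imp_le)
  then show ?thesis
    unfolding ExpX_def density_\<rho>_mult_eq_tilted monotone_indemnity_0[OF J] by simp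
qed

lemma premium_eq_enn2real:
  assumes J: "monotone_indemnity J"
  shows "premium (ktilde \<theta> c) q lam J = enn2real (\<integral>\<^sup>+s\<in>{0..}. ennreal (ktilde \<theta> c (survI q lam J s)) \<partial>lborel)"
proof -
  have [measurable]: "J \<in> borel_measurable borel" by (rule monotone_indemnity_measurable[OF J])
  show ?thesis
    unfolding premium_def
    by (rule set_lebesgue_integral_eq_enn2real) (use \<theta>_nonneg in \<open>auto simp: ktilde_def\<close>)
qed

lemma integrableX_\<rho>_mult:
  assumes J: "monotone_indemnity J"
  shows "integrableX q lam (\<lambda>x. \<rho> x * J x)"
proof -
  have [measurable]: "J \<in> borel_measurable borel" by (rule monotone_indemnity_measurable[OF J])
  have "ennreal q * (\<integral>\<^sup>+x\<in>{0<..}. ennreal (tilted x * J x) \<partial>lborel) < \<infinity>"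
    by (rule le_less_trans[OF nn_integral_tilted_mult_le_premium[OF J]])
      (use nn_integral_premium_finite[OF J] in \<open>simp add: ennreal_mult_less_top\<close>)
  then have "(\<integral>\<^sup>+x\<in>{0<..}. ennreal (tilted x * J x) \<partial>lborel) < \<infinity>"
    using q_pos by (auto simp: ennreal_mult_less_top)
  then show ?thesis
    unfolding integrableX_def density_\<rho>_mult_eq_tilted using monotone_indemnity_nonneg[OF J] tilted_pos
    by (intro set_integrable_nn_integral_less_top) (auto intro: mult_nonneg_nonneg less_imp_le)
qed

lemma ExpX_\<rho>_mult_le_premium:
  assumes J: "monotone_indemnity J"
  shows "ExpX q lam (\<lambda>x. \<rho> x * J x) \<le> Estar * premium (ktilde \<theta> c) q lam J"
proof -
  from nn_integral_tilted_mult_le_premium[OF J]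
  have "enn2real (ennreal q * (\<integral>\<^sup>+x\<in>{0<..}. ennreal (tilted x * J x) \<partial>lborel))
      \<le> enn2real (ennreal Estar * (\<integral>\<^sup>+s\<in>{0..}. ennreal (ktilde \<theta> c (survI q lam J s)) \<partial>lborel))"
    using nn_integral_premium_finite[OF J] by (intro enn2real_mono) (auto simp: ennreal_mult_less_top)
  then show ?thesis
    unfolding ExpX_\<rho>_mult_eq_enn2real[OF J] premium_eq_enn2real[OF J]
    using q_pos Estar_pos by (simp add: enn2real_mult)
qed

lemma ExpX_\<rho>_mult_eq_premium:
  assumes J: "monotone_indemnity J" and above_d: "\<And>s x. 0 \<le> s \<Longrightarrow> 0 < x \<Longrightarrow> s < J x \<Longrightarrow> d \<le> x"
  shows "ExpX q lam (\<lambda>x. \<rho> x * J x) = Estar * premium (ktilde \<theta> c) q lam J"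
proof -
  from nn_integral_tilted_mult_eq_premium[OF J above_d]
  have "enn2real (ennreal q * (\<integral>\<^sup>+x\<in>{0<..}. ennreal (tilted x * J x) \<partial>lborel))
      = enn2real (ennreal Estar * (\<integral>\<^sup>+s\<in>{0..}. ennreal (ktilde \<theta> c (survI q lam J s)) \<partial>lborel))"
    by (rule arg_cong)
  then show ?thesis
    unfolding ExpX_\<rho>_mult_eq_enn2real[OF J] premium_eq_enn2real[OF J]
    using q_pos Estar_pos by (simp add: enn2real_mult)
qed

(* T below is rho times the tangent of exp at m, evaluated at gamma (Istar x - J x); the level m
   is chosen so that ExpX T = exp m * Estar. *)
lemma cost_tangent_bound:
  assumes J: "monotone_indemnity J" and int: "integrableX q lam (\<lambda>x. exp (\<gamma> * (x - J x)))"
  defines "m \<equiv> \<gamma> * (ExpX q lam (\<lambda>x. \<rho> x * Istar x) - ExpX q lam (\<lambda>x. \<rho> x * J x)) / Estar"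
  shows "exp m * Estar \<le> ExpX q lam (\<lambda>x. exp (\<gamma> * (x - J x)))"
    and "ExpX q lam (\<lambda>x. exp (\<gamma> * (x - J x))) \<le> exp m * Estar \<Longrightarrow>
         AE x in lborel. 0 < x \<longrightarrow> \<gamma> * (Istar x - J x) = m"
proof -
  define D where "D x = \<rho> x * Istar x - \<rho> x * J x" for x
  define T where "T x = exp m * (1 - m) * \<rho> x + exp m * \<gamma> * D x" for x
  have int_D: "integrableX q lam D"
    unfolding D_def by (intro integrableX_diff integrableX_\<rho>_mult J monotone_indemnity_Istar)
  have int_T: "integrableX q lam T"
    unfolding T_def by (intro integrableX_linear integrableX_\<rho> int_D)
  have "ExpX q lam T = exp m * ((1 - m) * Estar + \<gamma> * ExpX q lam D)"
    unfolding T_def ExpX_linear[OF integrableX_\<rho> int_D] Estar_def by (simp add: algebra_simps)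
  also have "\<gamma> * ExpX q lam D = m * Estar"
    unfolding D_def m_def using Estar_pos
    by (simp add: ExpX_diff integrableX_\<rho>_mult J monotone_indemnity_Istar)
  finally have ExpX_T: "ExpX q lam T = exp m * Estar" by (simp add: algebra_simps)
  have T_eq: "T x = \<rho> x * (exp m * (1 + (\<gamma> * (Istar x - J x) - m)))" for x
    unfolding T_def D_def by (simp add: algebra_simps)
  have retained_eq: "exp (\<gamma> * (x - J x)) = \<rho> x * exp (\<gamma> * (Istar x - J x))" for x
    unfolding \<rho>_def by (simp add: algebra_simps flip: exp_add)
  have T_le: "T x \<le> exp (\<gamma> * (x - J x))" for x
    unfolding T_eq retained_eq using exp_tangent_le by (intro mult_left_mono) (auto simp: \<rho>_def)
  show "exp m * Estar \<le> ExpX q lam (\<lambda>x. exp (\<gamma> * (x - J x)))"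
    unfolding ExpX_T[symmetric] using q_pos q_le_1 lam_pos int_T int T_le by (intro ExpX_mono) auto
  assume "ExpX q lam (\<lambda>x. exp (\<gamma> * (x - J x))) \<le> exp m * Estar"
  then have "AE x in lborel. 0 < x \<longrightarrow> T x = exp (\<gamma> * (x - J x))"
    unfolding ExpX_T[symmetric] using q_pos q_le_1 lam_pos int_T int T_le by (intro ExpX_mono_AE_eq) auto
  then show "AE x in lborel. 0 < x \<longrightarrow> \<gamma> * (Istar x - J x) = m"
  proof (rule eventually_mono, intro impI)
    fix x assume "0 < x \<longrightarrow> T x = exp (\<gamma> * (x - J x))" "0 < x"
    then have "exp m * (1 + (\<gamma> * (Istar x - J x) - m)) = exp (\<gamma> * (Istar x - J x))"
      unfolding T_eq retained_eq by (simp add: \<rho>_def)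
    then show "\<gamma> * (Istar x - J x) = m" using exp_tangent_less by force
  qed
qed

lemma constant_gap_eq_0:
  assumes J: "monotone_indemnity J" and AE: "AE x in lborel. 0 < x \<longrightarrow> \<gamma> * (Istar x - J x) = m"
  shows "m = 0"
proof (rule ccontr)
  assume "m \<noteq> 0"
  then obtain x where "0 < x" "x < \<bar>m\<bar> / \<gamma>" and m_eq: "\<gamma> * (Istar x - J x) = m"
    using AE_lborel_obtain_in_interval[OF AE, of 0 "\<bar>m\<bar> / \<gamma>"] \<gamma>_pos by auto
  have "0 \<le> J x" "J x \<le> x"
    using monotone_indemnity_nonneg[OF J] monotone_indemnity_le[OF J] \<open>0 < x\<close> by auto
  moreover have "0 \<le> Istar x" "Istar x \<le> x" using Istar_nonneg Istar_le \<open>0 < x\<close> by auto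
  ultimately have "\<bar>Istar x - J x\<bar> \<le> x" unfolding abs_le_iff by linarith
  then have "\<bar>m\<bar> \<le> \<gamma> * x" unfolding m_eq[symmetric] using \<gamma>_pos by (simp add: abs_mult)
  then show False using \<open>x < \<bar>m\<bar> / \<gamma>\<close> \<gamma>_pos by (simp add: field_simps)
qed

lemma cost_Istar_le:
  assumes J: "monotone_indemnity J" and int: "integrableX q lam (\<lambda>x. exp (\<gamma> * (x - J x)))"
  shows "cost Istar \<le> cost J"
    and "cost J \<le> cost Istar \<Longrightarrow> AE x in lborel. 0 < x \<longrightarrow> J x = Istar x"
proof -
  define m where "m = \<gamma> * (ExpX q lam (\<lambda>x. \<rho> x * Istar x) - ExpX q lam (\<lambda>x. \<rho> x * J x)) / Estar"
  note tangent = cost_tangent_bound[OF J int, folded m_def]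
  let ?pJ = "premium (ktilde \<theta> c) q lam J" and ?pI = "premium (ktilde \<theta> c) q lam Istar"
  have priced_Istar: "ExpX q lam (\<lambda>x. \<rho> x * Istar x) = Estar * ?pI"
    by (rule ExpX_\<rho>_mult_eq_premium[OF monotone_indemnity_Istar]) (fact Istar_layers_above_d)
  have "\<gamma> * (Estar * ?pI - Estar * ?pJ) \<le> \<gamma> * (Estar * ?pI - ExpX q lam (\<lambda>x. \<rho> x * J x))"
    using ExpX_\<rho>_mult_le_premium[OF J] \<gamma>_pos by simp
  then have "\<gamma> * (Estar * ?pI - Estar * ?pJ) / Estar \<le> m"
    unfolding m_def priced_Istar
    using Estar_pos by (simp add: divide_right_mono)
  moreover have "\<gamma> * (Estar * ?pI - Estar * ?pJ) / Estar = \<gamma> * ?pI - \<gamma> * ?pJ"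
    using Estar_pos by (simp add: field_simps)
  ultimately have premium_gap: "\<gamma> * ?pI \<le> \<gamma> * ?pJ + m" by linarith
  have "cost Istar \<le> exp (\<gamma> * ?pJ + m) * Estar"
    unfolding cost_def ExpX_exp_retained_Istar using premium_gap Estar_pos by (intro mult_right_mono) auto
  also have "\<dots> = exp (\<gamma> * ?pJ) * (exp m * Estar)" by (simp add: exp_add)
  finally have cost_Istar_bound: "cost Istar \<le> exp (\<gamma> * ?pJ) * (exp m * Estar)" .
  moreover have "exp (\<gamma> * ?pJ) * (exp m * Estar) \<le> cost J"
    unfolding cost_def using tangent(1) by (intro mult_left_mono) simp_all
  ultimately show "cost Istar \<le> cost J" by (rule order.trans)
  assume "cost J \<le> cost Istar"
  then have "exp (\<gamma> * ?pJ) * ExpX q lam (\<lambda>x. exp (\<gamma> * (x - J x))) \<le> exp (\<gamma> * ?pJ) * (exp m * Estar)"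
    using cost_Istar_bound unfolding cost_def by (rule order.trans)
  then have "ExpX q lam (\<lambda>x. exp (\<gamma> * (x - J x))) \<le> exp m * Estar" by simp
  then have AE: "AE x in lborel. 0 < x \<longrightarrow> \<gamma> * (Istar x - J x) = m" by (rule tangent(2))
  have "m = 0" by (rule constant_gap_eq_0[OF J AE])
  with AE show "AE x in lborel. 0 < x \<longrightarrow> J x = Istar x"
    using \<gamma>_pos by (auto elim!: eventually_mono)
qed

lemma cost_cong: "(\<And>x. 0 \<le> x \<Longrightarrow> J x = J' x) \<Longrightarrow> cost J = cost J'"
  unfolding cost_def by (simp add: premium_cong[of J J'] ExpX_cong[of "\<lambda>x. exp (\<gamma> * (x - J x))"])

theorem optimal_indemnity:
  assumes u': "\<And>x. (u has_real_derivative exp (- \<gamma> * x)) (at x)"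
  shows "optimalI u (ktilde \<theta> c) w q lam (\<lambda>x. (1 - lam * (1 - c) / \<gamma>) * max (x - d) 0)"
    and "optimalI u (ktilde \<theta> c) w q lam I \<Longrightarrow>
         AE x in lborel. 0 < x \<longrightarrow> I x = (1 - lam * (1 - c) / \<gamma>) * max (x - d) 0"
proof -
  obtain K where u: "\<And>y. u y = K - exp (- \<gamma> * y) / \<gamma>"
    using exp_utility_form[OF u'] \<gamma>_pos by auto
  define C where "C = exp (- \<gamma> * w) / \<gamma>"
  have "0 < C" unfolding C_def using \<gamma>_pos by simp
  note integrable_iff = EU_exp_utility(1)[OF u lam_pos, where k = "ktilde \<theta> c" and w = w and q = q]
  have EU_cost: "EU u (ktilde \<theta> c) w q lam J = K - C * cost J"
    if "integrableX q lam (\<lambda>x. u (wealthFun (ktilde \<theta> c) w q lam J x))" for J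
    using EU_exp_utility(2)[OF u lam_pos] that integrable_iff \<gamma>_pos unfolding cost_def C_def by simp
  have int_Istar: "integrableX q lam (\<lambda>x. u (wealthFun (ktilde \<theta> c) w q lam Istar x))"
    using integrable_iff integrableX_\<rho> \<gamma>_pos unfolding \<rho>_def by simp
  have compare: "cost Istar \<le> cost J \<and> (cost J \<le> cost Istar \<longrightarrow> (AE x in lborel. 0 < x \<longrightarrow> J x = Istar x))"
    if "J \<in> Ic" "integrableX q lam (\<lambda>x. u (wealthFun (ktilde \<theta> c) w q lam J x))" for J
  proof -
    let ?J = "\<lambda>x. J (max x 0)"
    have "cost ?J = cost J" by (rule cost_cong) simp
    moreover have "integrableX q lam (\<lambda>x. exp (\<gamma> * (x - ?J x)))"
      using that(2) integrable_iff \<gamma>_pos by (subst integrableX_cong[where g = "\<lambda>x. exp (\<gamma> * (x - J x))"]) auto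
    note cost_Istar_le[OF monotone_indemnity_extend_Ic[OF that(1)] this]
    ultimately show ?thesis by (auto elim!: eventually_mono)
  qed
  show "optimalI u (ktilde \<theta> c) w q lam (\<lambda>x. (1 - lam * (1 - c) / \<gamma>) * max (x - d) 0)"
    unfolding Istar_eq[symmetric] optimalI_def
    using Istar_in_Ic int_Istar EU_cost compare \<open>0 < C\<close> by (auto intro: mult_left_mono)
  assume "optimalI u (ktilde \<theta> c) w q lam I"
  then have "I \<in> Ic" and int_I: "integrableX q lam (\<lambda>x. u (wealthFun (ktilde \<theta> c) w q lam I x))"
    and "EU u (ktilde \<theta> c) w q lam Istar \<le> EU u (ktilde \<theta> c) w q lam I"
    unfolding optimalI_def using Istar_in_Ic int_Istar by auto
  then have "cost I \<le> cost Istar" using EU_cost int_Istar \<open>0 < C\<close> by simp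
  with compare[OF \<open>I \<in> Ic\<close> int_I]
  show "AE x in lborel. 0 < x \<longrightarrow> I x = (1 - lam * (1 - c) / \<gamma>) * max (x - d) 0"
    unfolding Istar_eq by blast
qed

end

theorem proposition4p2:
  fixes q lam \<gamma> c \<theta> w :: real and u :: "real \<Rightarrow> real"
  assumes "0 < q" "q \<le> 1" "0 < lam" "0 < \<gamma>" "0 < c" "c < 1" "0 \<le> \<theta>"
    and "\<And>x. (u has_real_derivative exp (- \<gamma> * x)) (at x)"
    and "lam * (1 - c) < \<gamma>"
  shows "\<exists>d. d \<ge> 0 \<and> dEq q lam \<gamma> c \<theta> d \<and>
           (\<forall>d'. d' \<ge> 0 \<and> dEq q lam \<gamma> c \<theta> d' \<longrightarrow> d' = d) \<and>
           optimalI u (ktilde \<theta> c) w q lam (\<lambda>x. (1 - lam * (1 - c) / \<gamma>) * max (x - d) 0) \<and>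
           (\<forall>I. optimalI u (ktilde \<theta> c) w q lam I \<longrightarrow>
              (AE x in lborel. x > 0 \<longrightarrow> I x = (1 - lam * (1 - c) / \<gamma>) * max (x - d) 0)) \<and>
           (d > 0 \<longleftrightarrow> (q < 1 \<or> \<theta> > 0))"
proof -
  have root: "deductible_root q lam \<gamma> c \<theta> d" if "0 \<le> d" "dEq q lam \<gamma> c \<theta> d" for d
    using assms that dEq_iff_foc_gap_eq_0[OF assms(5)] by unfold_locales auto
  let ?layer = "\<lambda>d x. (1 - lam * (1 - c) / \<gamma>) * max (x - d) 0"
  have optimal: "optimalI u (ktilde \<theta> c) w q lam (?layer d)" if "0 \<le> d" "dEq q lam \<gamma> c \<theta> d" for d
    by (rule deductible_root.optimal_indemnity(1)[OF root[OF that] assms(8)])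
  have optimal_unique: "AE x in lborel. 0 < x \<longrightarrow> I x = ?layer d x"
    if "0 \<le> d" "dEq q lam \<gamma> c \<theta> d" "optimalI u (ktilde \<theta> c) w q lam I" for d I
    by (rule deductible_root.optimal_indemnity(2)[OF root[OF that(1,2)] assms(8) that(3)])
  obtain d where "0 \<le> d" "dEq q lam \<gamma> c \<theta> d"
    using foc_gap_has_root[OF assms(1-3,5-7,9)] dEq_iff_foc_gap_eq_0[OF assms(5)] by metis
  \<comment> \<open>two roots yield two optimal layer indemnities, which agree a.e. only if the roots do\<close>
  have unique: "d' = d" if "0 \<le> d'" "dEq q lam \<gamma> c \<theta> d'" for d'
    using optimal_unique[OF \<open>0 \<le> d\<close> \<open>dEq q lam \<gamma> c \<theta> d\<close> optimal[OF that]]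
    by (rule layer_indemnity_AE_eq_imp_eq[rotated 3]) (use assms(4,9) that \<open>0 \<le> d\<close> in \<open>auto simp: field_simps\<close>)
  have "dEq q lam \<gamma> c \<theta> 0 \<longleftrightarrow> \<not> (q < 1 \<or> \<theta> > 0)"
    using foc_gap_at_0(2)[OF assms(1,2,5-7)] dEq_iff_foc_gap_eq_0[OF assms(5)] assms(2,7) by auto
  then have "d > 0 \<longleftrightarrow> (q < 1 \<or> \<theta> > 0)"
    using unique[of 0] \<open>0 \<le> d\<close> \<open>dEq q lam \<gamma> c \<theta> d\<close> by (cases "d = 0") auto
  then show ?thesis
    using \<open>0 \<le> d\<close> \<open>dEq q lam \<gamma> c \<theta> d\<close> unique optimal optimal_unique by blast
qed

end
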